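(* Let $\Omega\subset\mathbb{R}^n$ ($n\ge2$) be a bounded domain with Lipschitz boundary and $\gamma,\beta,\theta\in M_0(\Omega)$ with $\theta(x)\ge\gamma(x)+\beta(x)+\varepsilon_0$ a.e. for some $\varepsilon_0>0$. Let $u\in S_{1,\gamma(x),\beta(x),\theta(x)}(\Omega)$ and $\lambda_u:=[u]_{S_{\gamma,\beta,\theta}}$. Then $$\max\{\lambda_u^{\gamma^-+\beta^-},\lambda_u^{\theta^+}\}\ge \Re^{\gamma,\beta,\theta}(u)\ge\min\{\lambda_u^{\gamma^-+\beta^-},\lambda_u^{\theta^+}\}.$$
   Context: $M_0(\Omega)$: measurable $p:\Omega\to[1,\infty]$ with $1\le p^-\le p(x)\le p^+<\infty$ a.e. ($p^\pm$ essential sup/inf). $D_i=\partial/\partial x_i$. $\Re^{\gamma,\beta,\theta}(u):=\int_\Omega|u|^{\theta(x)}dx+\sum_{i=1}^n\int_\Omega|u|^{\gamma(x)}|D_iu|^{\beta(x)}dx$, and $S_{1,\gamma(x),\beta(x),\theta(x)}(\Omega)=\{u\in L^1(\Omega):\Re^{\gamma,\beta,\theta}(u)<\infty\}$, with pseudo-norm $$[u]_{S_{\gamma,\beta,\theta}}=\inf\Big\{\lambda>0:\int_\Omega\Big|\frac{u}{\lambda}\Big|^{\theta(x)}dx+\sum_{i=1}^n\int_\Omega\Big|\frac{|u|^{\gamma(x)/\beta(x)}D_iu}{\lambda^{\gamma(x)/\beta(x)+1}}\Big|^{\beta(x)}dx\le1\Big\}.$$ *)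

theory Defs
  imports "HOL-Analysis.Analysis"
begin

definition partial :: "'n::finite \<Rightarrow> (real^'n \<Rightarrow> real) \<Rightarrow> real^'n \<Rightarrow> real" where
  "partial i f x = frechet_derivative f (at x) (axis i 1)"

coinductive smooth_fun :: "(real^'n::finite \<Rightarrow> real) \<Rightarrow> bool" where
  "(\<And>x. f differentiable (at x)) \<Longrightarrow> (\<And>i. smooth_fun (partial i f)) \<Longrightarrow> smooth_fun f"

definition test_fun :: "(real^'n::finite) set \<Rightarrow> (real^'n \<Rightarrow> real) \<Rightarrow> bool" where
  "test_fun \<Omega> \<phi> \<longleftrightarrow> smooth_fun \<phi> \<and> compact (closure {x. \<phi> x \<noteq> 0})
      \<and> closure {x. \<phi> x \<noteq> 0} \<subseteq> \<Omega>"

definition weak_partial :: "(real^'n::finite) set \<Rightarrow> 'n \<Rightarrow> (real^'n \<Rightarrow> real) \<Rightarrow> (real^'n \<Rightarrow> real) \<Rightarrow> bool" where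
  "weak_partial \<Omega> i u g \<longleftrightarrow>
     (\<forall>K. compact K \<and> K \<subseteq> \<Omega> \<longrightarrow> integrable (lebesgue_on K) u \<and> integrable (lebesgue_on K) g) \<and>
     (\<forall>\<phi>. test_fun \<Omega> \<phi> \<longrightarrow>
        (\<integral>x. u x * partial i \<phi> x \<partial>lebesgue_on \<Omega>) = - (\<integral>x. g x * \<phi> x \<partial>lebesgue_on \<Omega>))"

text \<open>Bounded domain with (strong) Lipschitz boundary: near every boundary point, after a rigid
  motion, Omega is the region below the graph of a Lipschitz function of the remaining n-1 coordinates.\<close>
definition lipschitz_domain :: "(real^'n::finite) set \<Rightarrow> bool" where
  "lipschitz_domain \<Omega> \<longleftrightarrow> open \<Omega> \<and> connected \<Omega> \<and> bounded \<Omega> \<and> \<Omega> \<noteq> {} \<and>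
     (\<forall>x0\<in>frontier \<Omega>. \<exists>V T k g L.
        open V \<and> x0 \<in> V \<and> orthogonal_transformation (T :: real^'n \<Rightarrow> real^'n) \<and>
        L-lipschitz_on UNIV g \<and> (\<forall>y. g y = g (y + (0 - y $ k) *\<^sub>R axis k 1)) \<and>
        (\<forall>x\<in>V. x \<in> \<Omega> \<longleftrightarrow> T (x - x0) $ k < g (T (x - x0))))"

definition ess_sup_on :: "(real^'n::finite) set \<Rightarrow> (real^'n \<Rightarrow> real) \<Rightarrow> real" where
  "ess_sup_on \<Omega> p = Inf {c. AE x in lebesgue_on \<Omega>. p x \<le> c}"

definition ess_inf_on :: "(real^'n::finite) set \<Rightarrow> (real^'n \<Rightarrow> real) \<Rightarrow> real" where
  "ess_inf_on \<Omega> p = Sup {c. AE x in lebesgue_on \<Omega>. c \<le> p x}"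

definition M0 :: "(real^'n::finite) set \<Rightarrow> (real^'n \<Rightarrow> real) \<Rightarrow> bool" where
  "M0 \<Omega> p \<longleftrightarrow> p \<in> borel_measurable (lebesgue_on \<Omega>) \<and>
     (\<exists>C. AE x in lebesgue_on \<Omega>. p x \<le> C) \<and>
     (\<exists>c. AE x in lebesgue_on \<Omega>. c \<le> p x) \<and>
     1 \<le> ess_inf_on \<Omega> p \<and>
     (AE x in lebesgue_on \<Omega>. ess_inf_on \<Omega> p \<le> p x \<and> p x \<le> ess_sup_on \<Omega> p)"

definition modular :: "(real^'n::finite) set \<Rightarrow> (real^'n \<Rightarrow> real) \<Rightarrow> (real^'n \<Rightarrow> real) \<Rightarrow> (real^'n \<Rightarrow> real)
    \<Rightarrow> (real^'n \<Rightarrow> real) \<Rightarrow> ('n \<Rightarrow> real^'n \<Rightarrow> real) \<Rightarrow> ennreal" where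
  "modular \<Omega> \<gamma> \<beta> \<theta> u Du =
     (\<integral>\<^sup>+x. ennreal (\<bar>u x\<bar> powr \<theta> x) \<partial>lebesgue_on \<Omega>) +
     (\<Sum>i\<in>UNIV. \<integral>\<^sup>+x. ennreal (\<bar>u x\<bar> powr \<gamma> x * \<bar>Du i x\<bar> powr \<beta> x) \<partial>lebesgue_on \<Omega>)"

definition in_S :: "(real^'n::finite) set \<Rightarrow> (real^'n \<Rightarrow> real) \<Rightarrow> (real^'n \<Rightarrow> real) \<Rightarrow> (real^'n \<Rightarrow> real)
    \<Rightarrow> (real^'n \<Rightarrow> real) \<Rightarrow> ('n \<Rightarrow> real^'n \<Rightarrow> real) \<Rightarrow> bool" where
  "in_S \<Omega> \<gamma> \<beta> \<theta> u Du \<longleftrightarrow> integrable (lebesgue_on \<Omega>) u \<and> (\<forall>i. weak_partial \<Omega> i u (Du i)) \<and>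
     modular \<Omega> \<gamma> \<beta> \<theta> u Du < \<infinity>"

definition S_norm :: "(real^'n::finite) set \<Rightarrow> (real^'n \<Rightarrow> real) \<Rightarrow> (real^'n \<Rightarrow> real) \<Rightarrow> (real^'n \<Rightarrow> real)
    \<Rightarrow> (real^'n \<Rightarrow> real) \<Rightarrow> ('n \<Rightarrow> real^'n \<Rightarrow> real) \<Rightarrow> real" where
  "S_norm \<Omega> \<gamma> \<beta> \<theta> u Du = Inf {s::real. s > 0 \<and>
     (\<integral>\<^sup>+x. ennreal (\<bar>u x / s\<bar> powr \<theta> x) \<partial>lebesgue_on \<Omega>) +
     (\<Sum>i\<in>UNIV. \<integral>\<^sup>+x. ennreal (\<bar>(\<bar>u x\<bar> powr (\<gamma> x / \<beta> x) * Du i x) / s powr (\<gamma> x / \<beta> x + 1)\<bar> powr \<beta> x)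
        \<partial>lebesgue_on \<Omega>) \<le> 1}"

end

theory Submission
  imports Defs
begin

text \<open>Scaling u by s > 0 multiplies the integrand of the first part of the modular by
  s^(-theta) and that of the gradient part by s^(-(gamma+beta)); since all these exponents lie
  a.e. in [gamma^- + beta^-, theta^+], the scaled modular F(s) lies between R/max(s^a, s^b) and
  R/min(s^a, s^b), where R is the modular and a, b are the two extreme exponents. The pseudo-norm
  is the infimum of the sublevel set {F <= 1}, and inverting the two power bounds at this
  infimum gives the claim.\<close>

lemma nn_integral_cmult_ge:
  fixes c :: ennreal
  shows "c * integral\<^sup>N M f \<le> (\<integral>\<^sup>+x. c * f x \<partial>M)"
proof -
  have "c * integral\<^sup>N M f = (SUP g \<in> {g. simple_function M g \<and> g \<le> f}. c * integral\<^sup>S M g)"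
    unfolding nn_integral_def by (simp add: SUP_mult_left_ennreal)
  also have "\<dots> \<le> (\<integral>\<^sup>+x. c * f x \<partial>M)"
  proof (rule SUP_least)
    fix g assume g: "g \<in> {g. simple_function M g \<and> g \<le> f}"
    then have "c * integral\<^sup>S M g = integral\<^sup>S M (\<lambda>x. c * g x)"
      by (simp add: simple_integral_mult)
    also have "\<dots> = integral\<^sup>N M (\<lambda>x. c * g x)"
      using g by (intro nn_integral_eq_simple_integral[symmetric]) (auto intro: simple_function_mult)
    also have "\<dots> \<le> (\<integral>\<^sup>+x. c * f x \<partial>M)"
      using g by (intro nn_integral_mono) (auto simp: le_fun_def intro: mult_left_mono)
    finally show "c * integral\<^sup>S M g \<le> (\<integral>\<^sup>+x. c * f x \<partial>M)" .
  qed
  finally show ?thesis .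
qed

text \<open>Unlike the library lemma nn_integral_cmult, no measurability of f is needed: the weak
  gradient is only known to be locally integrable.\<close>

lemma nn_integral_cmult_pos:
  assumes "0 < r"
  shows "(\<integral>\<^sup>+x. ennreal r * f x \<partial>M) = ennreal r * integral\<^sup>N M f"
proof (rule antisym)
  have "(\<integral>\<^sup>+x. ennreal r * f x \<partial>M) = ennreal r * (ennreal (1 / r) * (\<integral>\<^sup>+x. ennreal r * f x \<partial>M))"
    using assms by (simp add: ennreal_mult'[symmetric] mult.assoc[symmetric])
  also have "\<dots> \<le> ennreal r * (\<integral>\<^sup>+x. ennreal (1 / r) * (ennreal r * f x) \<partial>M)"
    by (intro mult_left_mono nn_integral_cmult_ge) auto
  also have "\<dots> = ennreal r * integral\<^sup>N M f"
    using assms by (simp add: ennreal_mult'[symmetric] mult.assoc[symmetric])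
  finally show "(\<integral>\<^sup>+x. ennreal r * f x \<partial>M) \<le> ennreal r * integral\<^sup>N M f" .
qed (rule nn_integral_cmult_ge)

lemma nn_integral_weight_bounds:
  fixes w f :: "'a \<Rightarrow> real"
  assumes "0 < c" "c \<le> C"
    and w: "AE x in M. c \<le> w x \<and> w x \<le> C"
    and f: "\<And>x. 0 \<le> f x"
  shows "ennreal c * (\<integral>\<^sup>+x. ennreal (f x) \<partial>M) \<le> (\<integral>\<^sup>+x. ennreal (w x * f x) \<partial>M)"
    and "(\<integral>\<^sup>+x. ennreal (w x * f x) \<partial>M) \<le> ennreal C * (\<integral>\<^sup>+x. ennreal (f x) \<partial>M)"
proof -
  have "ennreal c * (\<integral>\<^sup>+x. ennreal (f x) \<partial>M) = (\<integral>\<^sup>+x. ennreal (c * f x) \<partial>M)"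
    using assms by (simp add: nn_integral_cmult_pos ennreal_mult)
  also have "\<dots> \<le> (\<integral>\<^sup>+x. ennreal (w x * f x) \<partial>M)"
    using w by (intro nn_integral_mono_AE, elim eventually_mono) (auto intro!: ennreal_leI mult_right_mono f)
  finally show "ennreal c * (\<integral>\<^sup>+x. ennreal (f x) \<partial>M) \<le> (\<integral>\<^sup>+x. ennreal (w x * f x) \<partial>M)" .
  have "(\<integral>\<^sup>+x. ennreal (w x * f x) \<partial>M) \<le> (\<integral>\<^sup>+x. ennreal (C * f x) \<partial>M)"
    using w by (intro nn_integral_mono_AE, elim eventually_mono) (auto intro!: ennreal_leI mult_right_mono f)
  also have "\<dots> = ennreal C * (\<integral>\<^sup>+x. ennreal (f x) \<partial>M)"
    using assms by (simp add: nn_integral_cmult_pos ennreal_mult)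
  finally show "(\<integral>\<^sup>+x. ennreal (w x * f x) \<partial>M) \<le> ennreal C * (\<integral>\<^sup>+x. ennreal (f x) \<partial>M)" .
qed

lemma AE_lebesgue_on_open_imp_ex:
  fixes \<Omega> :: "'a::euclidean_space set"
  assumes "open \<Omega>" "\<Omega> \<noteq> {}" "AE x in lebesgue_on \<Omega>. P x"
  shows "\<exists>x\<in>\<Omega>. P x"
proof (rule ccontr)
  have "\<Omega> \<in> sets lebesgue"
    using assms(1) by auto
  moreover have "emeasure lebesgue \<Omega> \<noteq> 0"
    using assms(1,2) \<open>\<Omega> \<in> sets lebesgue\<close> open_not_negligible negligible_iff_emeasure0 by blast
  ultimately have "emeasure (lebesgue_on \<Omega>) (space (lebesgue_on \<Omega>)) \<noteq> 0"
    by (simp add: emeasure_restrict_space)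
  moreover assume "\<not> (\<exists>x\<in>\<Omega>. P x)"
  then have "AE x in lebesgue_on \<Omega>. False"
    using assms(3) by (auto elim: eventually_mono)
  ultimately show False
    using ae_filter_eq_bot_iff trivial_limit_def by metis
qed

lemma powr_le_iff_le_powr_inverse:
  fixes s r a :: real
  assumes "0 \<le> s" "0 \<le> r" "0 < a"
  shows "s powr a \<le> r \<longleftrightarrow> s \<le> r powr (1 / a)"
    and "s powr a < r \<longleftrightarrow> s < r powr (1 / a)"
proof -
  have r: "r = (r powr (1 / a)) powr a"
    using assms by (simp add: powr_powr)
  have mono: "x \<le> y \<longleftrightarrow> x powr a \<le> y powr a" if "0 \<le> x" "0 \<le> y" for x y :: real
    using that assms(3) by (metis not_le powr_less_mono2 powr_mono2 less_imp_le)
  show "s powr a \<le> r \<longleftrightarrow> s \<le> r powr (1 / a)"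
    using mono[OF assms(1), of "r powr (1 / a)"] r by simp
  show "s powr a < r \<longleftrightarrow> s < r powr (1 / a)"
    using mono[of "r powr (1 / a)" s] assms(1) r by (simp add: not_le[symmetric])
qed

lemma Inf_powr_bounds:
  fixes S :: "real set" and r a b :: real
  assumes "0 \<le> r" "0 < a" "0 < b"
    and S_pos: "S \<subseteq> {0<..}"
    and mem_S: "\<And>s. s \<in> S \<Longrightarrow> r \<le> max (s powr a) (s powr b)"
    and not_mem_S: "\<And>s. 0 < s \<Longrightarrow> s \<notin> S \<Longrightarrow> min (s powr a) (s powr b) < r"
  shows "min (Inf S powr a) (Inf S powr b) \<le> r \<and> r \<le> max (Inf S powr a) (Inf S powr b)"
proof -
  define \<rho> where "\<rho> = min (r powr (1 / a)) (r powr (1 / b))"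
  define \<rho>' where "\<rho>' = max (r powr (1 / a)) (r powr (1 / b))"
  have max_less: "max (s powr a) (s powr b) < r \<longleftrightarrow> s < \<rho>" if "0 \<le> s" for s
    using that assms(1-3) by (simp add: \<rho>_def powr_le_iff_le_powr_inverse)
  have min_less: "min (s powr a) (s powr b) < r \<longleftrightarrow> s < \<rho>'"
    and min_le: "min (s powr a) (s powr b) \<le> r \<longleftrightarrow> s \<le> \<rho>'" if "0 \<le> s" for s
    using that assms(1-3)
    by (simp_all add: \<rho>'_def powr_le_iff_le_powr_inverse
        min_le_iff_disj le_max_iff_disj min_less_iff_disj less_max_iff_disj)
  have "\<rho>' \<ge> 0" by (simp add: \<rho>'_def le_max_iff_disj)
  have above_mem_S: "s \<in> S" if "\<rho>' < s" for s
  proof (rule ccontr)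
    assume "s \<notin> S"
    moreover have "0 < s" using that \<open>\<rho>' \<ge> 0\<close> by linarith
    ultimately have "s < \<rho>'" using not_mem_S min_less by simp
    with that show False by simp
  qed
  then have "\<rho>' + 1 \<in> S" by simp
  then have ne: "S \<noteq> {}" by blast
  have bdd: "bdd_below S"
    using S_pos by (intro bdd_belowI[of _ 0]) auto
  have "0 \<le> Inf S"
    using ne S_pos by (intro cInf_greatest) auto
  have "\<rho> \<le> s" if "s \<in> S" for s
    using mem_S[OF that] max_less[of s] S_pos that by force
  then have "\<rho> \<le> Inf S"
    using ne by (intro cInf_greatest)
  then have "r \<le> max (Inf S powr a) (Inf S powr b)"
    using max_less[OF \<open>0 \<le> Inf S\<close>] by linarith
  moreover have "Inf S \<le> \<rho>'"
    by (rule dense_ge) (use bdd above_mem_S in \<open>auto intro: cInf_lower\<close>)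
  then have "min (Inf S powr a) (Inf S powr b) \<le> r"
    using min_le[OF \<open>0 \<le> Inf S\<close>] by simp
  ultimately show ?thesis by simp
qed

lemma powr_minus_between_min_max:
  fixes s a b p :: real
  assumes "0 < s" "a \<le> p" "p \<le> b"
  shows "1 / max (s powr a) (s powr b) \<le> s powr (-p)"
    and "s powr (-p) \<le> 1 / min (s powr a) (s powr b)"
proof -
  have "min (s powr a) (s powr b) \<le> s powr p \<and> s powr p \<le> max (s powr a) (s powr b)"
  proof (cases "1 \<le> s")
    case True
    then have "s powr a \<le> s powr p" "s powr p \<le> s powr b"
      using assms by (auto intro: powr_mono)
    then show ?thesis by auto
  next
    case False
    then have "s powr b \<le> s powr p" "s powr p \<le> s powr a"
      using assms by (auto intro: powr_mono')
    then show ?thesis by auto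
  qed
  then show "1 / max (s powr a) (s powr b) \<le> s powr (-p)"
    and "s powr (-p) \<le> 1 / min (s powr a) (s powr b)"
    using assms(1) by (auto intro!: divide_left_mono simp: powr_minus_divide min_def max_def)
qed

lemma ennreal_inverse_mult_le_1_iff:
  assumes "0 < m" "0 \<le> r"
  shows "ennreal (1 / m) * ennreal r \<le> 1 \<longleftrightarrow> r \<le> m"
  using assms by (simp add: ennreal_mult[symmetric] ennreal_le_1)

lemma abs_divide_powr:
  fixes s v p :: real
  assumes "0 < s"
  shows "\<bar>v / s\<bar> powr p = s powr (-p) * \<bar>v\<bar> powr p"
  using assms by (simp add: powr_divide powr_minus_divide abs_divide)

lemma scaled_gradient_term_powr:
  fixes s v d g p :: real
  assumes "0 < s" "0 < p"
  shows "\<bar>(\<bar>v\<bar> powr (g / p) * d) / s powr (g / p + 1)\<bar> powr p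
       = s powr (-(g + p)) * (\<bar>v\<bar> powr g * \<bar>d\<bar> powr p)"
proof -
  have "\<bar>(\<bar>v\<bar> powr (g / p) * d) / s powr (g / p + 1)\<bar> powr p
      = (\<bar>v\<bar> powr (g / p)) powr p * \<bar>d\<bar> powr p / (s powr (g / p + 1)) powr p"
    by (simp add: abs_mult abs_divide powr_divide powr_mult)
  also have "\<dots> = \<bar>v\<bar> powr g * \<bar>d\<bar> powr p / s powr (g + p)"
    using assms by (simp add: powr_powr distrib_right)
  also have "\<dots> = s powr (-(g + p)) * (\<bar>v\<bar> powr g * \<bar>d\<bar> powr p)"
    by (simp only: powr_minus_divide) simp
  finally show ?thesis .
qed

definition scaled_modular :: "(real^'n::finite) set \<Rightarrow> (real^'n \<Rightarrow> real) \<Rightarrow> (real^'n \<Rightarrow> real)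
    \<Rightarrow> (real^'n \<Rightarrow> real) \<Rightarrow> (real^'n \<Rightarrow> real) \<Rightarrow> ('n \<Rightarrow> real^'n \<Rightarrow> real) \<Rightarrow> real \<Rightarrow> ennreal" where
  "scaled_modular \<Omega> \<gamma> \<beta> \<theta> u Du s =
     (\<integral>\<^sup>+x. ennreal (\<bar>u x / s\<bar> powr \<theta> x) \<partial>lebesgue_on \<Omega>) +
     (\<Sum>i\<in>UNIV. \<integral>\<^sup>+x. ennreal (\<bar>(\<bar>u x\<bar> powr (\<gamma> x / \<beta> x) * Du i x) / s powr (\<gamma> x / \<beta> x + 1)\<bar> powr \<beta> x)
        \<partial>lebesgue_on \<Omega>)"

lemma S_norm_eq_Inf_scaled_modular:
  "S_norm \<Omega> \<gamma> \<beta> \<theta> u Du = Inf {s. 0 < s \<and> scaled_modular \<Omega> \<gamma> \<beta> \<theta> u Du s \<le> 1}"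
  by (simp add: S_norm_def scaled_modular_def)

lemma scaled_modular_bounds:
  assumes s: "0 < s"
    and exps: "AE x in lebesgue_on \<Omega>. 0 < \<beta> x \<and> a \<le> \<gamma> x + \<beta> x \<and> \<gamma> x + \<beta> x \<le> b
                 \<and> a \<le> \<theta> x \<and> \<theta> x \<le> b"
  shows "ennreal (1 / max (s powr a) (s powr b)) * modular \<Omega> \<gamma> \<beta> \<theta> u Du
           \<le> scaled_modular \<Omega> \<gamma> \<beta> \<theta> u Du s"
    and "scaled_modular \<Omega> \<gamma> \<beta> \<theta> u Du s
           \<le> ennreal (1 / min (s powr a) (s powr b)) * modular \<Omega> \<gamma> \<beta> \<theta> u Du"
proof -
  define c where "c = 1 / max (s powr a) (s powr b)"
  define C where "C = 1 / min (s powr a) (s powr b)"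
  have "0 < c" "c \<le> C"
    using s by (auto simp: c_def C_def max_def min_def intro!: divide_left_mono)
  have weighted: "scaled_modular \<Omega> \<gamma> \<beta> \<theta> u Du s =
      (\<integral>\<^sup>+x. ennreal (s powr (- \<theta> x) * \<bar>u x\<bar> powr \<theta> x) \<partial>lebesgue_on \<Omega>) +
      (\<Sum>i\<in>UNIV. \<integral>\<^sup>+x. ennreal (s powr (- (\<gamma> x + \<beta> x)) * (\<bar>u x\<bar> powr \<gamma> x * \<bar>Du i x\<bar> powr \<beta> x))
        \<partial>lebesgue_on \<Omega>)"
  proof -
    have "(\<integral>\<^sup>+x. ennreal (\<bar>(\<bar>u x\<bar> powr (\<gamma> x / \<beta> x) * Du i x) / s powr (\<gamma> x / \<beta> x + 1)\<bar> powr \<beta> x)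
          \<partial>lebesgue_on \<Omega>)
        = (\<integral>\<^sup>+x. ennreal (s powr (- (\<gamma> x + \<beta> x)) * (\<bar>u x\<bar> powr \<gamma> x * \<bar>Du i x\<bar> powr \<beta> x))
          \<partial>lebesgue_on \<Omega>)" for i
      using exps by (intro nn_integral_cong_AE, elim eventually_mono) (metis scaled_gradient_term_powr[OF s])
    then show ?thesis
      by (simp only: scaled_modular_def abs_divide_powr[OF s])
  qed
  have w_\<theta>: "AE x in lebesgue_on \<Omega>. c \<le> s powr (- \<theta> x) \<and> s powr (- \<theta> x) \<le> C"
    and w_\<gamma>\<beta>: "AE x in lebesgue_on \<Omega>. c \<le> s powr (- (\<gamma> x + \<beta> x)) \<and> s powr (- (\<gamma> x + \<beta> x)) \<le> C"
    using exps powr_minus_between_min_max[OF s] unfolding c_def C_def by (fastforce elim!: eventually_mono)+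
  note bounds_\<theta> = nn_integral_weight_bounds[OF \<open>0 < c\<close> \<open>c \<le> C\<close> w_\<theta>]
  note bounds_\<gamma>\<beta> = nn_integral_weight_bounds[OF \<open>0 < c\<close> \<open>c \<le> C\<close> w_\<gamma>\<beta>]
  show "ennreal c * modular \<Omega> \<gamma> \<beta> \<theta> u Du \<le> scaled_modular \<Omega> \<gamma> \<beta> \<theta> u Du s"
    unfolding weighted modular_def distrib_left sum_distrib_left
    by (intro add_mono sum_mono bounds_\<theta>(1) bounds_\<gamma>\<beta>(1)) auto
  show "scaled_modular \<Omega> \<gamma> \<beta> \<theta> u Du s \<le> ennreal C * modular \<Omega> \<gamma> \<beta> \<theta> u Du"
    unfolding weighted modular_def distrib_left sum_distrib_left
    by (intro add_mono sum_mono bounds_\<theta>(2) bounds_\<gamma>\<beta>(2)) auto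
qed

lemma S_norm_powr_bounds:
  assumes "0 < a" "0 < b"
    and exps: "AE x in lebesgue_on \<Omega>. 0 < \<beta> x \<and> a \<le> \<gamma> x + \<beta> x \<and> \<gamma> x + \<beta> x \<le> b
                 \<and> a \<le> \<theta> x \<and> \<theta> x \<le> b"
    and r: "modular \<Omega> \<gamma> \<beta> \<theta> u Du = ennreal r" "0 \<le> r"
  shows "min (S_norm \<Omega> \<gamma> \<beta> \<theta> u Du powr a) (S_norm \<Omega> \<gamma> \<beta> \<theta> u Du powr b) \<le> r
      \<and> r \<le> max (S_norm \<Omega> \<gamma> \<beta> \<theta> u Du powr a) (S_norm \<Omega> \<gamma> \<beta> \<theta> u Du powr b)"
  unfolding S_norm_eq_Inf_scaled_modular
proof (rule Inf_powr_bounds)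
  fix s :: real
  assume "s \<in> {s. 0 < s \<and> scaled_modular \<Omega> \<gamma> \<beta> \<theta> u Du s \<le> 1}"
  then have "0 < s" and F: "scaled_modular \<Omega> \<gamma> \<beta> \<theta> u Du s \<le> 1"
    by auto
  have "ennreal (1 / max (s powr a) (s powr b)) * ennreal r \<le> 1"
    using order_trans[OF scaled_modular_bounds(1)[OF \<open>0 < s\<close> exps, where u = u and Du = Du] F]
    by (simp add: r(1))
  then show "r \<le> max (s powr a) (s powr b)"
    using \<open>0 < s\<close> ennreal_inverse_mult_le_1_iff r(2) by (simp add: less_max_iff_disj)
next
  fix s :: real
  assume "0 < s" "s \<notin> {s. 0 < s \<and> scaled_modular \<Omega> \<gamma> \<beta> \<theta> u Du s \<le> 1}"
  then have "\<not> ennreal (1 / min (s powr a) (s powr b)) * ennreal r \<le> 1"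
    using scaled_modular_bounds(2)[OF \<open>0 < s\<close> exps, where u = u and Du = Du] r(1)
    by (auto dest: order_trans)
  then show "min (s powr a) (s powr b) < r"
    using ennreal_inverse_mult_le_1_iff r(2) \<open>0 < s\<close> by (simp add: not_le min_less_iff_disj)
qed (use assms(1,2,5) in auto)

theorem lemma3p4:
  fixes \<Omega> :: "(real^'n) set"
    and \<gamma> \<beta> \<theta> u :: "real^'n \<Rightarrow> real"
    and Du :: "'n \<Rightarrow> real^'n \<Rightarrow> real"
  assumes "CARD('n) \<ge> 2"
    and "lipschitz_domain \<Omega>"
    and "M0 \<Omega> \<gamma>" and "M0 \<Omega> \<beta>" and "M0 \<Omega> \<theta>"
    and "\<exists>\<epsilon>0>0. AE x in lebesgue_on \<Omega>. \<theta> x \<ge> \<gamma> x + \<beta> x + \<epsilon>0"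
    and "in_S \<Omega> \<gamma> \<beta> \<theta> u Du"
  shows "ennreal (max (S_norm \<Omega> \<gamma> \<beta> \<theta> u Du powr (ess_inf_on \<Omega> \<gamma> + ess_inf_on \<Omega> \<beta>))
                      (S_norm \<Omega> \<gamma> \<beta> \<theta> u Du powr ess_sup_on \<Omega> \<theta>)) \<ge> modular \<Omega> \<gamma> \<beta> \<theta> u Du
       \<and> modular \<Omega> \<gamma> \<beta> \<theta> u Du \<ge>
         ennreal (min (S_norm \<Omega> \<gamma> \<beta> \<theta> u Du powr (ess_inf_on \<Omega> \<gamma> + ess_inf_on \<Omega> \<beta>))
                      (S_norm \<Omega> \<gamma> \<beta> \<theta> u Du powr ess_sup_on \<Omega> \<theta>))"
proof -
  define a where "a = ess_inf_on \<Omega> \<gamma> + ess_inf_on \<Omega> \<beta>"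
  define b where "b = ess_sup_on \<Omega> \<theta>"
  obtain \<epsilon> where "0 < \<epsilon>" and \<epsilon>: "AE x in lebesgue_on \<Omega>. \<gamma> x + \<beta> x + \<epsilon> \<le> \<theta> x"
    using assms(6) by blast
  have "1 \<le> ess_inf_on \<Omega> \<gamma>" and \<gamma>: "AE x in lebesgue_on \<Omega>. ess_inf_on \<Omega> \<gamma> \<le> \<gamma> x"
    and "1 \<le> ess_inf_on \<Omega> \<beta>" and \<beta>: "AE x in lebesgue_on \<Omega>. ess_inf_on \<Omega> \<beta> \<le> \<beta> x"
    and \<theta>: "AE x in lebesgue_on \<Omega>. \<theta> x \<le> ess_sup_on \<Omega> \<theta>"
    using assms(3-5) unfolding M0_def by auto
  then have "0 < a"
    by (simp add: a_def)
  have exps: "AE x in lebesgue_on \<Omega>. 0 < \<beta> x \<and> a \<le> \<gamma> x + \<beta> x \<and> \<gamma> x + \<beta> x \<le> b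
      \<and> a \<le> \<theta> x \<and> \<theta> x \<le> b"
    using \<gamma> \<beta> \<theta> \<epsilon> by eventually_elim
      (use \<open>1 \<le> ess_inf_on \<Omega> \<beta>\<close> \<open>0 < \<epsilon>\<close> in \<open>auto simp: a_def b_def\<close>)
  moreover have "open \<Omega>" "\<Omega> \<noteq> {}"
    using assms(2) by (simp_all add: lipschitz_domain_def)
  ultimately obtain x where "a \<le> \<theta> x" "\<theta> x \<le> b"
    using AE_lebesgue_on_open_imp_ex by blast
  with \<open>0 < a\<close> have "0 < b"
    by linarith
  obtain r where r: "modular \<Omega> \<gamma> \<beta> \<theta> u Du = ennreal r" "0 \<le> r"
    using assms(7) by (cases "modular \<Omega> \<gamma> \<beta> \<theta> u Du") (auto simp: in_S_def)
  show ?thesis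
    using S_norm_powr_bounds[OF \<open>0 < a\<close> \<open>0 < b\<close> exps r]
    unfolding a_def b_def r by (auto intro: ennreal_leI)
qed

end
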